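(* For every $\epsilon>0$ there exists $n_0\ge1$ such that for every composition $\lambda$ of $n$ and every valley $v$ of $\lambda$ whose slope $\mathfrak{s}(v)=[a,b]$ satisfies $b-a\ge n_0$, $$(1-\epsilon)\frac{b-a}{n}\le\mathbb{P}_\lambda(1\in v)\le(1+\epsilon)\frac{b-a}{n}.$$
   Context: A composition $\lambda$ of $n$ is encoded by its descent set $D_\lambda\subset[1,n-1]$. A cell $i\in[1,n]$ is a peak if $i\in D_\lambda\cup\{n\}$ and $i-1\notin D_\lambda$, a valley if $i\notin D_\lambda$ and $i-1\in D_\lambda\cup\{0\}$. The slope $\mathfrak{s}(i)$ of a cell $i$ is the maximal integer subinterval of $[1,n]$ containing $i$ and no peak or valley other than $i$. $\mathbb{P}_\lambda(1\in v)$ is the probability that $\sigma(v)=1$ for $\sigma$ uniform on $\{\sigma\in\mathfrak{S}_n: des(\sigma)=D_\lambda\}$, $des(\sigma)=\{i:\sigma(i+1)<\sigma(i)\}$. *)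

theory Defs
  imports Complex_Main "HOL-Combinatorics.Permutations"
begin

text \<open>A composition of n is encoded by its descent set D, a subset of {1..<n}.
  Cells are 1..n.\<close>

definition is_peak :: "nat \<Rightarrow> nat set \<Rightarrow> nat \<Rightarrow> bool" where
  "is_peak n D i \<longleftrightarrow> i \<in> {1..n} \<and> i \<in> D \<union> {n} \<and> (i - 1) \<notin> D"

definition is_valley :: "nat \<Rightarrow> nat set \<Rightarrow> nat \<Rightarrow> bool" where
  "is_valley n D i \<longleftrightarrow> i \<in> {1..n} \<and> i \<notin> D \<and> (i - 1) \<in> D \<union> {0}"

definition slope_cand :: "nat \<Rightarrow> nat set \<Rightarrow> nat \<Rightarrow> nat \<Rightarrow> nat \<Rightarrow> bool" where
  "slope_cand n D i a b \<longleftrightarrow> 1 \<le> a \<and> a \<le> i \<and> i \<le> b \<and> b \<le> n \<and>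
     (\<forall>j\<in>{a..b}. (is_peak n D j \<or> is_valley n D j) \<longrightarrow> j = i)"

definition is_slope :: "nat \<Rightarrow> nat set \<Rightarrow> nat \<Rightarrow> nat \<Rightarrow> nat \<Rightarrow> bool" where
  "is_slope n D i a b \<longleftrightarrow> slope_cand n D i a b \<and>
     (\<forall>a' b'. slope_cand n D i a' b' \<longrightarrow> {a'..b'} \<subseteq> {a..b})"

definition des :: "nat \<Rightarrow> (nat \<Rightarrow> nat) \<Rightarrow> nat set" where
  "des n \<sigma> = {i \<in> {1..<n}. \<sigma> (Suc i) < \<sigma> i}"

definition perms_with_des :: "nat \<Rightarrow> nat set \<Rightarrow> (nat \<Rightarrow> nat) set" where
  "perms_with_des n D = {\<sigma>. \<sigma> permutes {1..n} \<and> des n \<sigma> = D}"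

definition prob_one_at :: "nat \<Rightarrow> nat set \<Rightarrow> nat \<Rightarrow> real" where
  "prob_one_at n D v = real (card {\<sigma> \<in> perms_with_des n D. \<sigma> v = 1}) / real (card (perms_with_des n D))"

end

theory Submission
  imports Defs
begin

text \<open>Let \<open>B = perms_with_des_except n D v\<close> be the set of permutations whose descent set
  agrees with \<open>D\<close> at every position not adjacent to the valley \<open>v\<close>. Replacing the value \<open>\<sigma> v = 1\<close> by an arbitrary \<open>w \<in> [1,n]\<close> (and
  lowering the values \<open>2, \<dots>, w\<close> by one) is a bijection from \<open>{\<sigma>. des \<sigma> = D, \<sigma> v = 1} \<times> [1,n]\<close> onto \<open>B\<close>,
  so \<open>|B| = n \<cdot> |{\<sigma>. des \<sigma> = D, \<sigma> v = 1}|\<close>. On the other hand, moving the entry at a position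
  \<open>j\<close> of the slope \<open>[a,b]\<close> to the valley (shifting the entries in between) maps
  \<open>{\<sigma>. des \<sigma> = D} \<times> [a,b]\<close> injectively into \<open>B\<close>, and every element of \<open>B\<close> arises in this way from
  some \<open>j \<in> [a-1,b+1]\<close>. Hence \<open>P\<^sub>\<lambda>(1 \<in> v)\<close> lies between \<open>(b-a+1)/n\<close> and \<open>(b-a+3)/n\<close>.\<close>

lemma lift_Suc_antimono_less_ivl:
  fixes f :: "nat \<Rightarrow> nat"
  assumes "\<And>i. i \<in> N \<Longrightarrow> f (Suc i) < f i" and "m < m'" and "{m..<m'} \<subseteq> N"
  shows "f m' < f m"
  using lift_Suc_mono_less_ivl[of N "\<lambda>i. - int (f i)"] assms by force

text \<open>\<open>\<sigma> \<circ> rot p j\<close> is \<open>\<sigma>\<close> with its entry at position \<open>j\<close> moved to position \<open>p\<close>, the entries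
  in between shifted by one step towards \<open>j\<close>.\<close>

definition rot :: "nat \<Rightarrow> nat \<Rightarrow> nat \<Rightarrow> nat" where
  "rot p j i = (if i = p then j else if j \<le> i \<and> i < p then Suc i
     else if p < i \<and> i \<le> j then i - 1 else i)"

definition rot_inv :: "nat \<Rightarrow> nat \<Rightarrow> nat \<Rightarrow> nat" where
  "rot_inv p j i = (if i = j then p else if j < i \<and> i \<le> p then i - 1
     else if p \<le> i \<and> i < j then Suc i else i)"

lemma rot_inv_rot [simp]: "rot_inv p j (rot p j i) = i"
  unfolding rot_def rot_inv_def by auto

lemma rot_rot_inv [simp]: "rot p j (rot_inv p j i) = i"
  unfolding rot_def rot_inv_def by auto

lemma rot_self [simp]: "rot p p = id"
  unfolding rot_def by auto

lemma rot_inv_self [simp]: "rot_inv p p = id"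
  unfolding rot_inv_def by auto

lemma rot_permutes:
  assumes "p \<in> {1..n}" "j \<in> {1..n}"
  shows "rot p j permutes {1..n}"
  unfolding permutes_def
proof (intro conjI allI impI)
  show "rot p j x = x" if "x \<notin> {1..n}" for x
    using that assms unfolding rot_def by auto
  show "\<exists>!x. rot p j x = y" for y
    by (rule ex1I[of _ "rot_inv p j y"]) (simp, metis rot_inv_rot)
qed

lemma rot_inv_permutes:
  assumes "p \<in> {1..n}" "j \<in> {1..n}"
  shows "rot_inv p j permutes {1..n}"
  unfolding permutes_def
proof (intro conjI allI impI)
  show "rot_inv p j x = x" if "x \<notin> {1..n}" for x
    using that assms unfolding rot_inv_def by auto
  show "\<exists>!x. rot_inv p j x = y" for y
    by (rule ex1I[of _ "rot p j y"]) (simp, metis rot_rot_inv)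
qed

lemma rot_one_less_iff: "2 \<le> x \<Longrightarrow> 2 \<le> y \<Longrightarrow> rot 1 w x < rot 1 w y \<longleftrightarrow> x < y"
  unfolding rot_def by auto

lemma rot_inv_one_less_iff:
  "1 \<le> x \<Longrightarrow> 1 \<le> y \<Longrightarrow> x \<noteq> w \<Longrightarrow> y \<noteq> w \<Longrightarrow> rot_inv 1 w x < rot_inv 1 w y \<longleftrightarrow> x < y"
  unfolding rot_inv_def by auto

lemma perms_with_des_iff:
  assumes "D \<subseteq> {1..<n}"
  shows "\<sigma> \<in> perms_with_des n D \<longleftrightarrow>
    \<sigma> permutes {1..n} \<and> (\<forall>i. 1 \<le> i \<and> i < n \<longrightarrow> (\<sigma> (Suc i) < \<sigma> i \<longleftrightarrow> i \<in> D))"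
proof -
  have "des n \<sigma> = D \<longleftrightarrow> (\<forall>i. 1 \<le> i \<and> i < n \<longrightarrow> (\<sigma> (Suc i) < \<sigma> i \<longleftrightarrow> i \<in> D))"
    unfolding des_def set_eq_iff using assms by auto
  thus ?thesis unfolding perms_with_des_def by auto
qed

lemma perms_with_desI:
  assumes "D \<subseteq> {1..<n}" "\<sigma> permutes {1..n}"
    and "\<And>i. 1 \<le> i \<Longrightarrow> i < n \<Longrightarrow> \<sigma> (Suc i) < \<sigma> i \<longleftrightarrow> i \<in> D"
  shows "\<sigma> \<in> perms_with_des n D"
  using assms perms_with_des_iff by blast

lemma perms_with_des_permutes: "\<sigma> \<in> perms_with_des n D \<Longrightarrow> \<sigma> permutes {1..n}"
  unfolding perms_with_des_def by auto

lemma perms_with_des_descent_iff: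
  "\<sigma> \<in> perms_with_des n D \<Longrightarrow> 1 \<le> i \<Longrightarrow> i < n \<Longrightarrow> \<sigma> (Suc i) < \<sigma> i \<longleftrightarrow> i \<in> D"
  unfolding perms_with_des_def des_def by (simp add: set_eq_iff) blast

lemma perms_with_des_descent:
  "\<sigma> \<in> perms_with_des n D \<Longrightarrow> 1 \<le> i \<Longrightarrow> i < n \<Longrightarrow> i \<in> D \<Longrightarrow> \<sigma> (Suc i) < \<sigma> i"
  using perms_with_des_descent_iff by blast

lemma perms_with_des_ascent:
  assumes "\<sigma> \<in> perms_with_des n D" "1 \<le> i" "i < n" "i \<notin> D"
  shows "\<sigma> i < \<sigma> (Suc i)"
proof -
  have "\<sigma> i \<noteq> \<sigma> (Suc i)"
    using permutes_inj[OF perms_with_des_permutes[OF assms(1)]] by (metis injD n_not_Suc_n)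
  moreover have "\<not> \<sigma> (Suc i) < \<sigma> i"
    using perms_with_des_descent_iff[OF assms(1-3)] assms(4) by blast
  ultimately show ?thesis by linarith
qed

lemma finite_perms_with_des: "finite (perms_with_des n D)"
  by (rule finite_subset[OF _ finite_permutations[of "{1..n}"]]) (auto simp: perms_with_des_def)

lemma perms_with_des_Suc_ascent:
  assumes \<sigma>: "\<sigma> \<in> perms_with_des n D" and D: "D \<subseteq> {1..<n}"
  shows "\<sigma> \<in> perms_with_des (Suc n) D"
proof (rule perms_with_desI)
  show "D \<subseteq> {1..<Suc n}" using D by auto
  show "\<sigma> permutes {1..Suc n}" using permutes_subset[OF perms_with_des_permutes[OF \<sigma>]] by auto
  fix i assume i: "1 \<le> i" "i < Suc n"
  show "\<sigma> (Suc i) < \<sigma> i \<longleftrightarrow> i \<in> D"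
  proof (cases "i < n")
    case True
    thus ?thesis using perms_with_des_descent_iff[OF \<sigma>] i by blast
  next
    case False
    hence "i = n" using i by auto
    moreover have "\<sigma> n \<in> {1..n}"
      using permutes_in_image[OF perms_with_des_permutes[OF \<sigma>]] i \<open>i = n\<close> by auto
    moreover have "\<sigma> (Suc n) = Suc n" using perms_with_des_permutes[OF \<sigma>] unfolding permutes_def by auto
    ultimately show ?thesis using D by auto
  qed
qed

text \<open>Appending a descent: the new last entry is \<open>1\<close>, the old values are raised by one.\<close>

lemma perms_with_des_Suc_descent:
  assumes \<sigma>: "\<sigma> \<in> perms_with_des n D" and D: "D \<subseteq> {1..<n}" and n: "1 \<le> n"
  shows "rot (Suc n) 1 \<circ> \<sigma> \<in> perms_with_des (Suc n) (insert n D)"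
proof (rule perms_with_desI)
  show "insert n D \<subseteq> {1..<Suc n}" using D n by auto
  have "rot (Suc n) 1 permutes {1..Suc n}" using n by (intro rot_permutes) auto
  moreover have "\<sigma> permutes {1..Suc n}"
    using permutes_subset[OF perms_with_des_permutes[OF \<sigma>]] by auto
  ultimately show "rot (Suc n) 1 \<circ> \<sigma> permutes {1..Suc n}" by (rule permutes_compose[rotated])
  have img: "\<sigma> x \<in> {1..n}" if "x \<in> {1..n}" for x
    using permutes_in_image[OF perms_with_des_permutes[OF \<sigma>]] that by auto
  have up: "rot (Suc n) 1 x = Suc x" if "x \<in> {1..n}" for x using that unfolding rot_def by auto
  fix i assume i: "1 \<le> i" "i < Suc n"
  show "(rot (Suc n) 1 \<circ> \<sigma>) (Suc i) < (rot (Suc n) 1 \<circ> \<sigma>) i \<longleftrightarrow> i \<in> insert n D"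
  proof (cases "i < n")
    case True
    thus ?thesis using perms_with_des_descent_iff[OF \<sigma>] i up img[of i] img[of "Suc i"] by auto
  next
    case False
    hence "i = n" using i by auto
    moreover have "\<sigma> (Suc n) = Suc n" using perms_with_des_permutes[OF \<sigma>] unfolding permutes_def by auto
    moreover have "rot (Suc n) 1 (Suc n) = 1" unfolding rot_def by auto
    ultimately show ?thesis using up img[of n] n by auto
  qed
qed

lemma perms_with_des_nonempty: "D \<subseteq> {1..<n} \<Longrightarrow> perms_with_des n D \<noteq> {}"
proof (induction n arbitrary: D)
  case 0
  show ?case using perms_with_desI[OF "0.prems", of id] by (auto simp: permutes_id)
next
  case (Suc n)
  have D: "D - {n} \<subseteq> {1..<n}" using Suc.prems by auto
  then obtain \<sigma> where \<sigma>: "\<sigma> \<in> perms_with_des n (D - {n})" using Suc.IH by blast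
  show ?case
  proof (cases "n \<in> D")
    case False
    thus ?thesis using perms_with_des_Suc_ascent[OF \<sigma> D] by auto
  next
    case True
    hence "insert n (D - {n}) = D" "1 \<le> n" using Suc.prems by auto
    thus ?thesis using perms_with_des_Suc_descent[OF \<sigma> D] by auto
  qed
qed

definition perms_with_des_except :: "nat \<Rightarrow> nat set \<Rightarrow> nat \<Rightarrow> (nat \<Rightarrow> nat) set" where
  "perms_with_des_except n D v = {\<rho>. \<rho> permutes {1..n} \<and>
     (\<forall>i. 1 \<le> i \<and> i < n \<and> Suc i \<noteq> v \<and> i \<noteq> v \<longrightarrow> (\<rho> (Suc i) < \<rho> i \<longleftrightarrow> i \<in> D))}"

lemma perms_with_des_exceptI:
  assumes "\<rho> permutes {1..n}"
    and "\<And>i. 1 \<le> i \<Longrightarrow> i < n \<Longrightarrow> Suc i \<noteq> v \<Longrightarrow> i \<noteq> v \<Longrightarrow> \<rho> (Suc i) < \<rho> i \<longleftrightarrow> i \<in> D"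
  shows "\<rho> \<in> perms_with_des_except n D v"
  using assms unfolding perms_with_des_except_def by blast

lemma perms_with_des_except_permutes: "\<rho> \<in> perms_with_des_except n D v \<Longrightarrow> \<rho> permutes {1..n}"
  unfolding perms_with_des_except_def by auto

lemma perms_with_des_except_descent_iff:
  "\<rho> \<in> perms_with_des_except n D v \<Longrightarrow> 1 \<le> i \<Longrightarrow> i < n \<Longrightarrow> Suc i \<noteq> v \<Longrightarrow> i \<noteq> v \<Longrightarrow>
    \<rho> (Suc i) < \<rho> i \<longleftrightarrow> i \<in> D"
  unfolding perms_with_des_except_def by auto

lemma perms_with_des_except_inj: "\<rho> \<in> perms_with_des_except n D v \<Longrightarrow> \<rho> x = \<rho> y \<Longrightarrow> x = y"
  using permutes_inj[OF perms_with_des_except_permutes] by (metis injD)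

lemma finite_perms_with_des_except: "finite (perms_with_des_except n D v)"
  by (rule finite_subset[OF _ finite_permutations[of "{1..n}"]])
    (auto simp: perms_with_des_except_def)

lemma perms_with_des_subset_except: "perms_with_des n D \<subseteq> perms_with_des_except n D v"
  using perms_with_des_descent_iff
  unfolding perms_with_des_except_def by (auto dest: perms_with_des_permutes)

locale valley_cell =
  fixes n :: nat and D :: "nat set" and v :: nat
  assumes D_subset: "D \<subseteq> {1..<n}" and valley: "is_valley n D v"
begin

lemma valley_bounds: "1 \<le> v" "v \<le> n"
  using valley unfolding is_valley_def by auto

lemma valley_notin: "v \<notin> D"
  using valley unfolding is_valley_def by auto

lemma pred_valley_in: "2 \<le> v \<Longrightarrow> v - 1 \<in> D"
  using valley unfolding is_valley_def by auto

lemma valley_min: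
  assumes \<sigma>: "\<sigma> \<in> perms_with_des n D"
  shows "(2 \<le> v \<longrightarrow> \<sigma> v < \<sigma> (v - 1)) \<and> (v < n \<longrightarrow> \<sigma> v < \<sigma> (Suc v))"
proof -
  have "2 \<le> v \<longrightarrow> \<sigma> (Suc (v - 1)) < \<sigma> (v - 1)"
    using perms_with_des_descent[OF \<sigma>, of "v - 1"] pred_valley_in valley_bounds by auto
  moreover have "v < n \<longrightarrow> \<sigma> v < \<sigma> (Suc v)"
    using perms_with_des_ascent[OF \<sigma>] valley_notin valley_bounds by auto
  ultimately show ?thesis by (auto simp: Suc_diff_le)
qed

lemma perms_with_des_except_valley_min:
  assumes \<rho>: "\<rho> \<in> perms_with_des_except n D v"
    and "2 \<le> v \<longrightarrow> \<rho> v < \<rho> (v - 1)" "v < n \<longrightarrow> \<rho> v < \<rho> (Suc v)"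
  shows "\<rho> \<in> perms_with_des n D"
proof (rule perms_with_desI[OF D_subset perms_with_des_except_permutes[OF \<rho>]])
  fix i assume i: "1 \<le> i" "i < n"
  consider "Suc i = v" | "i = v" | "Suc i \<noteq> v \<and> i \<noteq> v" by auto
  thus "\<rho> (Suc i) < \<rho> i \<longleftrightarrow> i \<in> D"
    by cases (use assms(2,3) i pred_valley_in valley_notin
        perms_with_des_except_descent_iff[OF \<rho> i] in auto)
qed

lemma rot_one_comp_mem_except:
  assumes \<sigma>: "\<sigma> \<in> perms_with_des n D" "\<sigma> v = 1" and w: "w \<in> {1..n}"
  shows "rot 1 w \<circ> \<sigma> \<in> perms_with_des_except n D v"
proof -
  have perm: "rot 1 w \<circ> \<sigma> permutes {1..n}"
    using permutes_compose[OF perms_with_des_permutes[OF \<sigma>(1)] rot_permutes] w valley_bounds by auto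
  have ge2: "2 \<le> \<sigma> x" if "x \<in> {1..n}" "x \<noteq> v" for x
  proof -
    have "\<sigma> x \<in> {1..n}" using permutes_in_image[OF perms_with_des_permutes[OF \<sigma>(1)]] that by auto
    moreover have "\<sigma> x \<noteq> \<sigma> v"
      using permutes_inj[OF perms_with_des_permutes[OF \<sigma>(1)]] that by (metis injD)
    ultimately show ?thesis using \<sigma>(2) by auto
  qed
  show ?thesis
    using rot_one_less_iff ge2 perms_with_des_descent_iff[OF \<sigma>(1)]
    by (intro perms_with_des_exceptI[OF perm]) auto
qed

lemma rot_inv_one_comp_mem:
  assumes \<rho>: "\<rho> \<in> perms_with_des_except n D v"
  shows "rot_inv 1 (\<rho> v) \<circ> \<rho> \<in> perms_with_des n D"
proof -
  define w where "w = \<rho> v"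
  define \<sigma> where "\<sigma> = rot_inv 1 w \<circ> \<rho>"
  have img: "\<rho> x \<in> {1..n}" if "x \<in> {1..n}" for x
    using permutes_in_image[OF perms_with_des_except_permutes[OF \<rho>]] that by auto
  have w: "w \<in> {1..n}" using img valley_bounds unfolding w_def by auto
  have perm: "\<sigma> permutes {1..n}"
    using permutes_compose[OF perms_with_des_except_permutes[OF \<rho>] rot_inv_permutes] w
    unfolding \<sigma>_def by auto
  have at_v: "\<sigma> v = 1" unfolding \<sigma>_def w_def rot_inv_def by auto
  have ne: "\<rho> x \<noteq> w" if "x \<noteq> v" for x
    using perms_with_des_except_inj[OF \<rho>, of x v] that unfolding w_def by auto
  have ge2: "2 \<le> \<sigma> x" if "x \<in> {1..n}" "x \<noteq> v" for x
    using img[OF that(1)] ne[OF that(2)] w unfolding \<sigma>_def rot_inv_def by auto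
  have "\<sigma> \<in> perms_with_des_except n D v"
  proof (rule perms_with_des_exceptI[OF perm])
    fix i assume i: "1 \<le> i" "i < n" "Suc i \<noteq> v" "i \<noteq> v"
    have "\<sigma> (Suc i) < \<sigma> i \<longleftrightarrow> \<rho> (Suc i) < \<rho> i" unfolding \<sigma>_def
      using rot_inv_one_less_iff[of "\<rho> (Suc i)" "\<rho> i" w] img[of i] img[of "Suc i"]
        ne[of i] ne[of "Suc i"] i by auto
    thus "\<sigma> (Suc i) < \<sigma> i \<longleftrightarrow> i \<in> D" using perms_with_des_except_descent_iff[OF \<rho> i] by simp
  qed
  moreover have "2 \<le> \<sigma> (v - 1)" if "2 \<le> v" using that valley_bounds by (intro ge2) auto
  moreover have "2 \<le> \<sigma> (Suc v)" if "v < n" using that by (intro ge2) auto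
  ultimately have "\<sigma> \<in> perms_with_des n D"
    by (intro perms_with_des_except_valley_min) (auto simp: at_v)
  thus ?thesis unfolding \<sigma>_def w_def .
qed

lemma card_perms_with_des_except:
  "card (perms_with_des_except n D v) = card {\<sigma> \<in> perms_with_des n D. \<sigma> v = 1} * n"
proof -
  have "bij_betw (\<lambda>(\<sigma>, w). rot 1 w \<circ> \<sigma>)
          ({\<sigma> \<in> perms_with_des n D. \<sigma> v = 1} \<times> {1..n}) (perms_with_des_except n D v)"
  proof (rule bij_betw_byWitness[where f' = "\<lambda>\<rho>. (rot_inv 1 (\<rho> v) \<circ> \<rho>, \<rho> v)"])
    have "rot 1 w 1 = w" for w unfolding rot_def by auto
    thus "\<forall>x \<in> {\<sigma> \<in> perms_with_des n D. \<sigma> v = 1} \<times> {1..n}.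
        (\<lambda>\<rho>. (rot_inv 1 (\<rho> v) \<circ> \<rho>, \<rho> v)) ((\<lambda>(\<sigma>, w). rot 1 w \<circ> \<sigma>) x) = x"
      by (auto simp: fun_eq_iff)
    show "\<forall>\<rho> \<in> perms_with_des_except n D v.
        (\<lambda>(\<sigma>, w). rot 1 w \<circ> \<sigma>) ((\<lambda>\<rho>. (rot_inv 1 (\<rho> v) \<circ> \<rho>, \<rho> v)) \<rho>) = \<rho>"
      by (auto simp: fun_eq_iff)
    show "(\<lambda>(\<sigma>, w). rot 1 w \<circ> \<sigma>) ` ({\<sigma> \<in> perms_with_des n D. \<sigma> v = 1} \<times> {1..n})
        \<subseteq> perms_with_des_except n D v"
      using rot_one_comp_mem_except by auto
    have "\<rho> v \<in> {1..n}" if "\<rho> \<in> perms_with_des_except n D v" for \<rho>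
      using permutes_in_image[OF perms_with_des_except_permutes[OF that]] valley_bounds by auto
    moreover have "rot_inv 1 w w = 1" for w unfolding rot_inv_def by auto
    ultimately show "(\<lambda>\<rho>. (rot_inv 1 (\<rho> v) \<circ> \<rho>, \<rho> v)) ` perms_with_des_except n D v
        \<subseteq> {\<sigma> \<in> perms_with_des n D. \<sigma> v = 1} \<times> {1..n}"
      using rot_inv_one_comp_mem by auto
  qed
  from bij_betw_same_card[OF this] show ?thesis by (simp add: card_cartesian_product)
qed

end

locale valley_slope = valley_cell +
  fixes a b :: nat
  assumes slope: "is_slope n D v a b"
begin

lemma slope_cand: "slope_cand n D v a b"
  using slope unfolding is_slope_def by blast

lemma slope_bounds: "1 \<le> a" "a \<le> v" "v \<le> b" "b \<le> n"
  using slope_cand unfolding slope_cand_def by auto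

lemma no_peak_or_valley_in_slope:
  "j \<in> {a..b} \<Longrightarrow> j \<noteq> v \<Longrightarrow> \<not> is_peak n D j \<and> \<not> is_valley n D j"
  using slope_cand unfolding slope_cand_def by auto

lemma des_before_valley: assumes "a \<le> i" "i < v" shows "i \<in> D"
proof -
  have "i \<le> v - 1" using assms by auto
  then show ?thesis
  proof (induction rule: inc_induct)
    case base
    show ?case using pred_valley_in assms slope_bounds by auto
  next
    case (step m)
    have "Suc m \<in> {a..b}" "Suc m \<noteq> v" using step assms slope_bounds by auto
    hence "\<not> is_peak n D (Suc m)" using no_peak_or_valley_in_slope by blast
    thus ?case using step slope_bounds valley_bounds unfolding is_peak_def by auto
  qed
qed

lemma asc_after_valley: assumes "v \<le> i" "i < b" shows "i \<notin> D"
  using assms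
proof (induction rule: dec_induct)
  case base
  show ?case using valley_notin .
next
  case (step m)
  have "Suc m \<in> {a..b}" "Suc m \<noteq> v" using step assms slope_bounds by auto
  hence "\<not> is_peak n D (Suc m)" using no_peak_or_valley_in_slope by blast
  thus ?case using step slope_bounds valley_bounds unfolding is_peak_def by auto
qed

lemma des_before_slope: assumes "2 \<le> a" shows "a - 1 \<in> D"
proof (cases "a < v")
  case True
  hence "a \<in> D" using des_before_valley by auto
  moreover have "\<not> is_peak n D a" using no_peak_or_valley_in_slope[of a] True slope_bounds by auto
  ultimately show ?thesis using slope_bounds unfolding is_peak_def by auto
next
  case False
  thus ?thesis using pred_valley_in assms slope_bounds by auto
qed

lemma slope_start_ge_2: assumes "2 \<le> v" shows "2 \<le> a"
proof (rule ccontr)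
  assume "\<not> 2 \<le> a"
  hence "a = 1" using slope_bounds by auto
  hence "1 \<in> D" using des_before_valley[of 1] assms by auto
  moreover have "\<not> is_peak n D 1"
    using no_peak_or_valley_in_slope[of 1] \<open>a = 1\<close> slope_bounds assms by auto
  ultimately show False using D_subset unfolding is_peak_def by auto
qed

lemma asc_at_slope_end: assumes "b < n" shows "b \<notin> D"
proof (cases "b = v")
  case True
  thus ?thesis using valley_notin by simp
next
  case False
  hence "b - 1 \<notin> D" using asc_after_valley[of "b - 1"] slope_bounds by auto
  moreover have "\<not> is_peak n D b" using no_peak_or_valley_in_slope[of b] False slope_bounds by auto
  ultimately show ?thesis using slope_bounds assms False unfolding is_peak_def by auto
qed

lemma slope_end_less: assumes "v < n" shows "b < n"
proof (rule ccontr)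
  assume "\<not> b < n"
  hence "b = n" using slope_bounds by auto
  hence "n - 1 \<notin> D" using asc_after_valley[of "n - 1"] assms by auto
  moreover have "\<not> is_peak n D n"
    using no_peak_or_valley_in_slope[of n] \<open>b = n\<close> slope_bounds assms by auto
  ultimately show False using valley_bounds assms unfolding is_peak_def by auto
qed

text \<open>By maximality of the slope, a cell adjacent to it must be a peak or a valley.\<close>

lemma adjacent_peak_or_valley:
  assumes "c \<notin> {a..b}" "{a'..b'} = insert c {a..b}" "1 \<le> a'" "b' \<le> n"
  shows "is_peak n D c \<or> is_valley n D c"
proof (rule ccontr)
  assume c: "\<not> (is_peak n D c \<or> is_valley n D c)"
  have "a' \<le> v" "v \<le> b'" using assms(2) slope_bounds by auto
  moreover have "j = v" if "j \<in> {a'..b'}" "is_peak n D j \<or> is_valley n D j" for j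
    using that c no_peak_or_valley_in_slope[of j] assms(2) by auto
  ultimately have "slope_cand n D v a' b'"
    using assms(3,4) unfolding slope_cand_def by blast
  hence "{a'..b'} \<subseteq> {a..b}" using slope unfolding is_slope_def by blast
  thus False using assms(1,2) by blast
qed

lemma asc_two_before_slope: assumes "3 \<le> a" shows "a - 2 \<notin> D"
proof -
  have "{a - 1..b} = insert (a - 1) {a..b}" using assms slope_bounds by auto
  hence "is_peak n D (a - 1) \<or> is_valley n D (a - 1)"
    using adjacent_peak_or_valley[of "a - 1" "a - 1" b] assms slope_bounds by auto
  moreover have "a - 1 \<in> D" using des_before_slope assms by auto
  ultimately have "is_peak n D (a - 1)" unfolding is_valley_def by auto
  thus ?thesis unfolding is_peak_def using assms by (simp add: numeral_2_eq_2 numeral_3_eq_3)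
qed

lemma des_after_slope: assumes "Suc b < n" shows "Suc b \<in> D"
proof -
  have "{a..Suc b} = insert (Suc b) {a..b}" using slope_bounds by auto
  hence "is_peak n D (Suc b) \<or> is_valley n D (Suc b)"
    using adjacent_peak_or_valley[of "Suc b" a "Suc b"] assms slope_bounds by auto
  moreover have "b \<notin> D" using asc_at_slope_end assms by auto
  ultimately have "is_peak n D (Suc b)" using slope_bounds unfolding is_valley_def by auto
  thus ?thesis unfolding is_peak_def using assms by auto
qed

lemma decreasing_before_valley:
  assumes "\<sigma> \<in> perms_with_des n D" "a \<le> x" "x < y" "y \<le> v"
  shows "\<sigma> y < \<sigma> x"
proof (rule lift_Suc_antimono_less_ivl[of "{a..<v}" \<sigma> x y])
  show "\<sigma> (Suc i) < \<sigma> i" if "i \<in> {a..<v}" for i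
    using that perms_with_des_descent[OF assms(1)] des_before_valley slope_bounds valley_bounds by auto
qed (use assms in auto)

lemma increasing_after_valley:
  assumes "\<sigma> \<in> perms_with_des n D" "v \<le> x" "x < y" "y \<le> b"
  shows "\<sigma> x < \<sigma> y"
proof (rule lift_Suc_mono_less_ivl[of "{v..<b}" \<sigma> x y])
  show "\<sigma> i < \<sigma> (Suc i)" if "i \<in> {v..<b}" for i
    using that perms_with_des_ascent[OF assms(1)] asc_after_valley slope_bounds valley_bounds by auto
qed (use assms in auto)

lemma rot_comp_mem_except_left:
  assumes \<sigma>: "\<sigma> \<in> perms_with_des n D" and j: "a \<le> j" "j < v"
  shows "\<sigma> \<circ> rot v j \<in> perms_with_des_except n D v"
proof -
  have "rot v j permutes {1..n}" using j slope_bounds valley_bounds by (intro rot_permutes) auto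
  hence perm: "\<sigma> \<circ> rot v j permutes {1..n}"
    using permutes_compose perms_with_des_permutes[OF \<sigma>] by blast
  show ?thesis
  proof (rule perms_with_des_exceptI[OF perm])
    fix i assume i: "1 \<le> i" "i < n" "Suc i \<noteq> v" "i \<noteq> v"
    consider "Suc i < j" | "Suc i = j" | "j \<le> i \<and> i < v" | "v < i" using i by linarith
    thus "(\<sigma> \<circ> rot v j) (Suc i) < (\<sigma> \<circ> rot v j) i \<longleftrightarrow> i \<in> D"
    proof cases
      case 1
      hence "rot v j i = i" "rot v j (Suc i) = Suc i" using j unfolding rot_def by auto
      thus ?thesis using perms_with_des_descent_iff[OF \<sigma> i(1,2)] by simp
    next
      case 2
      have r: "rot v j i = i" "rot v j (Suc i) = Suc (Suc i)" using 2 j unfolding rot_def by auto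
      have iD: "i \<in> D"
      proof (cases "a \<le> i")
        case True
        thus ?thesis using des_before_valley[of i] 2 j by auto
      next
        case False
        hence "a = Suc i" using 2 j by auto
        thus ?thesis using des_before_slope i by auto
      qed
      have "\<sigma> (Suc (Suc i)) < \<sigma> (Suc i)"
        using perms_with_des_descent[OF \<sigma>, of "Suc i"] des_before_valley[of "Suc i"] 2 j valley_bounds
        by auto
      moreover have "\<sigma> (Suc i) < \<sigma> i" using perms_with_des_descent[OF \<sigma> i(1,2) iD] .
      ultimately show ?thesis using r iD by simp
    next
      case 3
      hence r: "rot v j i = Suc i" "rot v j (Suc i) = Suc (Suc i)" using i unfolding rot_def by auto
      have "i \<in> D" "Suc i \<in> D" using des_before_valley[of i] des_before_valley[of "Suc i"] 3 j i by auto
      moreover have "Suc i < n" using 3 i valley_bounds by auto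
      ultimately show ?thesis using perms_with_des_descent[OF \<sigma>, of "Suc i"] r by simp
    next
      case 4
      hence "rot v j i = i" "rot v j (Suc i) = Suc i" using j unfolding rot_def by auto
      thus ?thesis using perms_with_des_descent_iff[OF \<sigma> i(1,2)] by simp
    qed
  qed
qed

lemma rot_comp_mem_except_right:
  assumes \<sigma>: "\<sigma> \<in> perms_with_des n D" and j: "v < j" "j \<le> b"
  shows "\<sigma> \<circ> rot v j \<in> perms_with_des_except n D v"
proof -
  have "rot v j permutes {1..n}" using j slope_bounds valley_bounds by (intro rot_permutes) auto
  hence perm: "\<sigma> \<circ> rot v j permutes {1..n}"
    using permutes_compose perms_with_des_permutes[OF \<sigma>] by blast
  show ?thesis
  proof (rule perms_with_des_exceptI[OF perm])
    fix i assume i: "1 \<le> i" "i < n" "Suc i \<noteq> v" "i \<noteq> v"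
    consider "Suc i < v" | "v < i \<and> Suc i \<le> j" | "i = j" | "j < i" using i by linarith
    thus "(\<sigma> \<circ> rot v j) (Suc i) < (\<sigma> \<circ> rot v j) i \<longleftrightarrow> i \<in> D"
    proof cases
      case 1
      hence "rot v j i = i" "rot v j (Suc i) = Suc i" using j unfolding rot_def by auto
      thus ?thesis using perms_with_des_descent_iff[OF \<sigma> i(1,2)] by simp
    next
      case 2
      hence r: "rot v j i = i - 1" "rot v j (Suc i) = i" unfolding rot_def by auto
      have "v \<le> i - 1" "i - 1 < b" "i < b" using 2 j by auto
      hence "i - 1 \<notin> D" "i \<notin> D" using asc_after_valley[of "i - 1"] asc_after_valley[of i] 2 by auto
      moreover have "1 \<le> i - 1" "Suc (i - 1) = i" using 2 valley_bounds by auto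
      ultimately have "\<sigma> (i - 1) < \<sigma> i"
        using perms_with_des_ascent[OF \<sigma>, of "i - 1"] i by auto
      thus ?thesis using r \<open>i \<notin> D\<close> by simp
    next
      case 3
      hence r: "rot v j i = j - 1" "rot v j (Suc i) = Suc j" using j unfolding rot_def by auto
      have "j \<notin> D" using asc_after_valley[of j] asc_at_slope_end j 3 i by (cases "j < b") auto
      moreover have "j - 1 \<notin> D" using asc_after_valley[of "j - 1"] j by auto
      moreover have "1 \<le> j - 1" "Suc (j - 1) = j" using j valley_bounds by auto
      ultimately have "\<sigma> (j - 1) < \<sigma> j" "\<sigma> j < \<sigma> (Suc j)"
        using perms_with_des_ascent[OF \<sigma>, of "j - 1"] perms_with_des_ascent[OF \<sigma>, of j] 3 i by auto
      thus ?thesis using r \<open>j \<notin> D\<close> 3 by simp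
    next
      case 4
      hence "rot v j i = i" "rot v j (Suc i) = Suc i" using j unfolding rot_def by auto
      thus ?thesis using perms_with_des_descent_iff[OF \<sigma> i(1,2)] by simp
    qed
  qed
qed

lemma rot_comp_mem_except:
  assumes "\<sigma> \<in> perms_with_des n D" "j \<in> {a..b}"
  shows "\<sigma> \<circ> rot v j \<in> perms_with_des_except n D v"
proof -
  consider "j < v" | "j = v" | "v < j" by linarith
  thus ?thesis
  proof cases
    case 2
    thus ?thesis using assms(1) perms_with_des_subset_except by auto
  qed (use assms rot_comp_mem_except_left rot_comp_mem_except_right in auto)
qed

text \<open>Among the positions \<open>v - 1\<close>, \<open>v\<close>, \<open>v + 1\<close> of \<open>\<sigma> \<circ> rot v j\<close>, the smallest entry sits at
  \<open>v - 1\<close>, \<open>v\<close> or \<open>v + 1\<close> according as \<open>j < v\<close>, \<open>j = v\<close> or \<open>j > v\<close>; this recovers the side of \<open>j\<close>.\<close>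

lemma rot_comp_min_left:
  assumes \<sigma>: "\<sigma> \<in> perms_with_des n D" and j: "a \<le> j" "j < v"
  shows "\<sigma> (rot v j (v - 1)) < \<sigma> (rot v j v) \<and>
    (v < n \<longrightarrow> \<sigma> (rot v j (v - 1)) < \<sigma> (rot v j (Suc v)))"
proof -
  have r: "rot v j (v - 1) = v" "rot v j v = j" "rot v j (Suc v) = Suc v"
    using j unfolding rot_def by auto
  have "\<sigma> v < \<sigma> j" using decreasing_before_valley[OF \<sigma> j(1) j(2)] by auto
  moreover have "v < n \<longrightarrow> \<sigma> v < \<sigma> (Suc v)"
    using perms_with_des_ascent[OF \<sigma>] valley_notin valley_bounds by auto
  ultimately show ?thesis using r by simp
qed

lemma rot_comp_min_right:
  assumes \<sigma>: "\<sigma> \<in> perms_with_des n D" and j: "v < j" "j \<le> b"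
  shows "\<sigma> (rot v j (Suc v)) < \<sigma> (rot v j v) \<and>
    (2 \<le> v \<longrightarrow> \<sigma> (rot v j (Suc v)) < \<sigma> (rot v j (v - 1)))"
proof -
  have r: "rot v j (v - 1) = v - 1" "rot v j v = j" "rot v j (Suc v) = v"
    using j valley_bounds unfolding rot_def by auto
  have "\<sigma> v < \<sigma> j" using increasing_after_valley[OF \<sigma> _ j(1) j(2)] by auto
  thus ?thesis using r valley_min[OF \<sigma>] by simp
qed

lemma rot_comp_neq:
  assumes \<sigma>: "\<sigma> \<in> perms_with_des n D" and \<sigma>': "\<sigma>' \<in> perms_with_des n D"
    and jj: "a \<le> j" "j < j'" "j' \<le> b"
  shows "\<sigma> \<circ> rot v j \<noteq> \<sigma>' \<circ> rot v j'"
proof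
  assume "\<sigma> \<circ> rot v j = \<sigma>' \<circ> rot v j'"
  hence e: "\<sigma> (rot v j x) = \<sigma>' (rot v j' x)" for x by (metis comp_apply)
  consider "j' < v" | "j < v \<and> j' = v" | "j < v \<and> v < j'" | "j = v \<and> v < j'" | "v < j"
    using jj by linarith
  thus False
  proof cases
    case 1
    have "rot v j j = Suc j" "rot v j' j = j" "rot v j v = j" "rot v j' v = j'"
      using 1 jj unfolding rot_def by auto
    hence "\<sigma> (Suc j) = \<sigma>' j" "\<sigma> j = \<sigma>' j'" using e[of j] e[of v] by auto
    moreover have "\<sigma>' j' < \<sigma>' j" using decreasing_before_valley[OF \<sigma>' jj(1) jj(2)] 1 by auto
    moreover have "\<sigma> (Suc j) < \<sigma> j"
      using perms_with_des_descent[OF \<sigma>, of j] des_before_valley[of j] jj 1 slope_bounds by auto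
    ultimately show False by auto
  next
    case 2
    thus False using rot_comp_min_left[OF \<sigma> jj(1)] valley_min[OF \<sigma>'] e[of "v - 1"] e[of v]
      jj slope_bounds by auto
  next
    case 3
    hence "v < n" "2 \<le> v" using jj slope_bounds by auto
    thus False using rot_comp_min_left[OF \<sigma> jj(1)] rot_comp_min_right[OF \<sigma>' _ jj(3)] 3
      e[of "v - 1"] e[of "Suc v"] by auto
  next
    case 4
    hence "v < n" using jj slope_bounds by auto
    thus False using valley_min[OF \<sigma>] rot_comp_min_right[OF \<sigma>' _ jj(3)] 4
      e[of v] e[of "Suc v"] by auto
  next
    case 5
    have "rot v j j' = j'" "rot v j' j' = j' - 1" "rot v j v = j" "rot v j' v = j'"
      using 5 jj unfolding rot_def by auto
    hence "\<sigma> j' = \<sigma>' (j' - 1)" "\<sigma> j = \<sigma>' j'" using e[of j'] e[of v] by auto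
    moreover have "\<sigma> j < \<sigma> j'" using increasing_after_valley[OF \<sigma> _ jj(2) jj(3)] 5 by auto
    moreover have "\<sigma>' (j' - 1) < \<sigma>' j'"
      using increasing_after_valley[OF \<sigma>', of "j' - 1" j'] 5 jj by auto
    ultimately show False by auto
  qed
qed

lemma inj_on_rot_comp: "inj_on (\<lambda>(\<sigma>, j). \<sigma> \<circ> rot v j) (perms_with_des n D \<times> {a..b})"
proof (rule inj_onI, clarify)
  fix \<sigma> j \<sigma>' j'
  assume \<sigma>: "\<sigma> \<in> perms_with_des n D" "\<sigma>' \<in> perms_with_des n D"
    and j: "j \<in> {a..b}" "j' \<in> {a..b}" and eq: "\<sigma> \<circ> rot v j = \<sigma>' \<circ> rot v j'"
  have "j = j'"
    using rot_comp_neq[OF \<sigma>, of j j'] rot_comp_neq[OF \<sigma>(2,1), of j' j] j eq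
    by (cases j j' rule: linorder_cases) auto
  moreover have "\<sigma> x = \<sigma>' x" for x
    using fun_cong[OF eq, of "rot_inv v j x"] \<open>j = j'\<close> by simp
  ultimately show "\<sigma> = \<sigma>' \<and> j = j'" by auto
qed

lemma rot_inv_comp_mem_left:
  assumes \<rho>: "\<rho> \<in> perms_with_des_except n D v" and v: "2 \<le> v"
    and left: "\<rho> (v - 1) < \<rho> v" "v < n \<longrightarrow> \<rho> (v - 1) < \<rho> (Suc v)"
    and j: "a - 1 \<le> j" "j < v" "\<rho> j < \<rho> v" "a - 1 < j \<longrightarrow> \<not> \<rho> (j - 1) < \<rho> v"
  shows "\<rho> \<circ> rot_inv v j \<in> perms_with_des n D"
proof (rule perms_with_desI[OF D_subset])
  have a: "2 \<le> a" using slope_start_ge_2 v by auto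
  have in_D: "i \<in> D" if "a - 1 \<le> i" "i < v" for i
  proof (cases "a \<le> i")
    case False
    hence "i = a - 1" using that by auto
    thus ?thesis using des_before_slope a by simp
  qed (use that des_before_valley in auto)
  show "\<rho> \<circ> rot_inv v j permutes {1..n}"
    using permutes_compose[OF rot_inv_permutes perms_with_des_except_permutes[OF \<rho>]]
      j a valley_bounds by auto
  fix i assume i: "1 \<le> i" "i < n"
  note \<rho>_des = perms_with_des_except_descent_iff[OF \<rho>]
  consider "Suc i < j" | "Suc i = j" | "i = j" | "j < i \<and> i < v" | "i = v" | "v < i" by linarith
  thus "(\<rho> \<circ> rot_inv v j) (Suc i) < (\<rho> \<circ> rot_inv v j) i \<longleftrightarrow> i \<in> D"
  proof cases
    case 1
    hence "rot_inv v j i = i" "rot_inv v j (Suc i) = Suc i" using j unfolding rot_inv_def by auto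
    thus ?thesis using \<rho>_des[OF i] 1 j by auto
  next
    case 2
    hence r: "rot_inv v j i = i" "rot_inv v j (Suc i) = v" using j unfolding rot_inv_def by auto
    show ?thesis
    proof (cases "j = a - 1")
      case True
      hence "i = a - 2" "3 \<le> a" using 2 i a by auto
      hence "i \<notin> D" using asc_two_before_slope by auto
      hence "\<rho> i < \<rho> (Suc i)"
        using \<rho>_des[OF i] perms_with_des_except_inj[OF \<rho>, of i "Suc i"] 2 j by fastforce
      thus ?thesis using r \<open>i \<notin> D\<close> j(3) 2 by auto
    next
      case False
      hence "\<rho> v < \<rho> i" using j 2 perms_with_des_except_inj[OF \<rho>, of i v] by fastforce
      moreover have "i \<in> D" using in_D[of i] j 2 False by auto
      ultimately show ?thesis using r by auto
    qed
  next
    case 3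
    hence "rot_inv v j i = v" "rot_inv v j (Suc i) = j" using j unfolding rot_inv_def by auto
    thus ?thesis using 3 in_D[of j] j by auto
  next
    case 4
    hence r: "rot_inv v j i = i - 1" "rot_inv v j (Suc i) = i" using j unfolding rot_inv_def by auto
    have "i - 1 \<in> D" "i \<in> D" using in_D[of "i - 1"] in_D[of i] 4 j by auto
    hence "\<rho> i < \<rho> (i - 1)" using \<rho>_des[of "i - 1"] 4 j a i by (auto simp: Suc_diff_le)
    thus ?thesis using r \<open>i \<in> D\<close> by auto
  next
    case 5
    hence "rot_inv v j i = v - 1" "rot_inv v j (Suc i) = Suc v" using j unfolding rot_inv_def by auto
    thus ?thesis using 5 left i valley_notin by auto
  next
    case 6
    hence "rot_inv v j i = i" "rot_inv v j (Suc i) = Suc i" using j unfolding rot_inv_def by auto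
    thus ?thesis using \<rho>_des[OF i] 6 by auto
  qed
qed

lemma rot_inv_comp_mem_right:
  assumes \<rho>: "\<rho> \<in> perms_with_des_except n D v" and v: "v < n"
    and right: "\<rho> (Suc v) < \<rho> v" "2 \<le> v \<longrightarrow> \<rho> (Suc v) < \<rho> (v - 1)"
    and j: "v < j" "j \<le> Suc b" "\<rho> j < \<rho> v" "j < Suc b \<longrightarrow> \<not> \<rho> (Suc j) < \<rho> v"
  shows "\<rho> \<circ> rot_inv v j \<in> perms_with_des n D"
proof (rule perms_with_desI[OF D_subset])
  have b: "b < n" using slope_end_less v by auto
  have not_in_D: "i \<notin> D" if "v \<le> i" "i \<le> b" for i
    using that asc_after_valley[of i] asc_at_slope_end b by (cases "i < b") auto
  show "\<rho> \<circ> rot_inv v j permutes {1..n}"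
    using permutes_compose[OF rot_inv_permutes perms_with_des_except_permutes[OF \<rho>]]
      j b valley_bounds by auto
  fix i assume i: "1 \<le> i" "i < n"
  note \<rho>_des = perms_with_des_except_descent_iff[OF \<rho>]
  consider "Suc i < v" | "Suc i = v" | "v \<le> i \<and> Suc i < j" | "Suc i = j" | "i = j" | "j < i"
    using j by linarith
  thus "(\<rho> \<circ> rot_inv v j) (Suc i) < (\<rho> \<circ> rot_inv v j) i \<longleftrightarrow> i \<in> D"
  proof cases
    case 1
    hence "rot_inv v j i = i" "rot_inv v j (Suc i) = Suc i" using j unfolding rot_inv_def by auto
    thus ?thesis using \<rho>_des[OF i] 1 by auto
  next
    case 2
    hence "rot_inv v j i = i" "rot_inv v j (Suc i) = Suc v" using j unfolding rot_inv_def by auto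
    moreover have "2 \<le> v" "i = v - 1" using 2 i by auto
    ultimately show ?thesis using right pred_valley_in by auto
  next
    case 3
    hence r: "rot_inv v j i = Suc i" "rot_inv v j (Suc i) = Suc (Suc i)"
      using j unfolding rot_inv_def by auto
    have "i \<notin> D" "Suc i \<notin> D" using not_in_D[of i] not_in_D[of "Suc i"] 3 j by auto
    moreover have "Suc i < n" using 3 j b by auto
    ultimately show ?thesis using \<rho>_des[of "Suc i"] r 3 by auto
  next
    case 4
    hence "rot_inv v j i = j" "rot_inv v j (Suc i) = v" using j unfolding rot_inv_def by auto
    thus ?thesis using not_in_D[of i] 4 j by auto
  next
    case 5
    hence r: "rot_inv v j i = v" "rot_inv v j (Suc i) = Suc j" using j unfolding rot_inv_def by auto
    show ?thesis
    proof (cases "j = Suc b")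
      case True
      hence "j \<in> D" using des_after_slope 5 i by auto
      hence "\<rho> (Suc j) < \<rho> j" using \<rho>_des[of j] 5 i j by auto
      thus ?thesis using r \<open>j \<in> D\<close> j(3) 5 by auto
    next
      case False
      thus ?thesis using r j not_in_D[of j] 5 by auto
    qed
  next
    case 6
    hence "rot_inv v j i = i" "rot_inv v j (Suc i) = Suc i" using j unfolding rot_inv_def by auto
    thus ?thesis using \<rho>_des[OF i] 6 j by auto
  qed
qed

lemma exists_rot_inv_comp_mem:
  assumes \<rho>: "\<rho> \<in> perms_with_des_except n D v"
  shows "\<exists>j \<in> {a - 1..Suc b}. \<rho> \<circ> rot_inv v j \<in> perms_with_des n D"
proof -
  have ne: "\<rho> x \<noteq> \<rho> y" if "x \<noteq> y" for x y using perms_with_des_except_inj[OF \<rho>] that by blast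
  have "v - 1 \<noteq> v" "v - 1 \<noteq> Suc v" if "2 \<le> v" using that by auto
  hence "(2 \<le> v \<longrightarrow> \<rho> v < \<rho> (v - 1)) \<and> (v < n \<longrightarrow> \<rho> v < \<rho> (Suc v)) \<or>
    2 \<le> v \<and> \<rho> (v - 1) < \<rho> v \<and> (v < n \<longrightarrow> \<rho> (v - 1) < \<rho> (Suc v)) \<or>
    v < n \<and> \<rho> (Suc v) < \<rho> v \<and> (2 \<le> v \<longrightarrow> \<rho> (Suc v) < \<rho> (v - 1))"
    using ne[of v "Suc v"] ne[of "v - 1" v] ne[of "v - 1" "Suc v"] by (cases "2 \<le> v") auto
  then consider (valley) "(2 \<le> v \<longrightarrow> \<rho> v < \<rho> (v - 1)) \<and> (v < n \<longrightarrow> \<rho> v < \<rho> (Suc v))"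
    | (left) "2 \<le> v" "\<rho> (v - 1) < \<rho> v" "v < n \<longrightarrow> \<rho> (v - 1) < \<rho> (Suc v)"
    | (right) "v < n" "\<rho> (Suc v) < \<rho> v" "2 \<le> v \<longrightarrow> \<rho> (Suc v) < \<rho> (v - 1)"
    by blast
  thus ?thesis
  proof cases
    case valley
    hence "\<rho> \<in> perms_with_des n D" using perms_with_des_except_valley_min[OF \<rho>] by blast
    moreover have "v \<in> {a - 1..Suc b}" using slope_bounds by auto
    ultimately show ?thesis by (metis comp_id rot_inv_self)
  next
    case left
    define P where "P j \<longleftrightarrow> a - 1 \<le> j \<and> \<rho> j < \<rho> v" for j
    define j where "j = (LEAST j. P j)"
    have "P (v - 1)" using left slope_bounds unfolding P_def by auto
    hence "P j" "j \<le> v - 1" unfolding j_def by (auto intro: LeastI Least_le)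
    moreover have "\<not> \<rho> (j - 1) < \<rho> v" if "a - 1 < j"
      using not_less_Least[of "j - 1" P] that unfolding j_def P_def by auto
    ultimately have "\<rho> \<circ> rot_inv v j \<in> perms_with_des n D"
      using rot_inv_comp_mem_left[OF \<rho> left, of j] left(1) unfolding P_def by auto
    moreover have "j \<in> {a - 1..Suc b}" using \<open>P j\<close> \<open>j \<le> v - 1\<close> slope_bounds unfolding P_def by auto
    ultimately show ?thesis by blast
  next
    case right
    define P where "P j \<longleftrightarrow> j \<le> Suc b \<and> \<rho> j < \<rho> v" for j
    define j where "j = (GREATEST j. P j)"
    have "P (Suc v)" using right slope_bounds unfolding P_def by auto
    moreover have bound: "\<And>y. P y \<Longrightarrow> y \<le> Suc b" unfolding P_def by auto
    ultimately have "P j" "Suc v \<le> j" unfolding j_def by (auto intro: GreatestI_nat Greatest_le_nat)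
    moreover have "\<not> \<rho> (Suc j) < \<rho> v" if "j < Suc b"
      using Greatest_le_nat[of P "Suc j", OF _ bound] that unfolding j_def P_def by auto
    ultimately have "\<rho> \<circ> rot_inv v j \<in> perms_with_des n D"
      using rot_inv_comp_mem_right[OF \<rho> right, of j] unfolding P_def by auto
    moreover have "j \<in> {a - 1..Suc b}" using \<open>P j\<close> \<open>Suc v \<le> j\<close> slope_bounds unfolding P_def by auto
    ultimately show ?thesis by blast
  qed
qed

lemma card_perms_with_des_except_lower:
  "card (perms_with_des n D) * (b - a + 1) \<le> card (perms_with_des_except n D v)"
proof -
  have "(\<lambda>(\<sigma>, j). \<sigma> \<circ> rot v j) ` (perms_with_des n D \<times> {a..b}) \<subseteq> perms_with_des_except n D v"
    using rot_comp_mem_except by auto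
  hence "card (perms_with_des n D \<times> {a..b}) \<le> card (perms_with_des_except n D v)"
    using card_inj_on_le[OF inj_on_rot_comp] finite_perms_with_des_except by blast
  moreover have "Suc b - a = b - a + 1" using slope_bounds by auto
  ultimately show ?thesis by (simp add: card_cartesian_product)
qed

lemma card_perms_with_des_except_upper:
  "card (perms_with_des_except n D v) \<le> card (perms_with_des n D) * (b - a + 3)"
proof -
  have "perms_with_des_except n D v \<subseteq> (\<lambda>(\<sigma>, j). \<sigma> \<circ> rot v j) ` (perms_with_des n D \<times> {a - 1..Suc b})"
  proof
    fix \<rho> assume "\<rho> \<in> perms_with_des_except n D v"
    then obtain j where "j \<in> {a - 1..Suc b}" "\<rho> \<circ> rot_inv v j \<in> perms_with_des n D"
      using exists_rot_inv_comp_mem by blast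
    moreover have "\<rho> = (\<rho> \<circ> rot_inv v j) \<circ> rot v j" by (auto simp: fun_eq_iff)
    ultimately show "\<rho> \<in> (\<lambda>(\<sigma>, j). \<sigma> \<circ> rot v j) ` (perms_with_des n D \<times> {a - 1..Suc b})"
      by force
  qed
  hence "card (perms_with_des_except n D v) \<le> card (perms_with_des n D \<times> {a - 1..Suc b})"
    using surj_card_le finite_perms_with_des by (metis finite_SigmaI finite_atLeastAtMost)
  moreover have "card {a - 1..Suc b} = b - a + 3" using slope_bounds by auto
  ultimately show ?thesis by (simp add: card_cartesian_product)
qed

lemma prob_one_at_bounds:
  "real (b - a + 1) / real n \<le> prob_one_at n D v \<and> prob_one_at n D v \<le> real (b - a + 3) / real n"
proof -
  let ?S = "card (perms_with_des n D)" and ?T = "card {\<sigma> \<in> perms_with_des n D. \<sigma> v = 1}"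
  have n: "real n > 0" using valley_bounds by auto
  have S: "real ?S > 0"
    using perms_with_des_nonempty[OF D_subset] finite_perms_with_des card_gt_0_iff by auto
  have "?S * (b - a + 1) \<le> ?T * n" "?T * n \<le> ?S * (b - a + 3)"
    using card_perms_with_des_except_lower card_perms_with_des_except_upper
      card_perms_with_des_except by auto
  hence "real ?S * real (b - a + 1) \<le> real ?T * real n" "real ?T * real n \<le> real ?S * real (b - a + 3)"
    by (simp_all only: of_nat_mult[symmetric] of_nat_le_iff)
  thus ?thesis unfolding prob_one_at_def using n S
    by (simp add: divide_le_eq le_divide_eq mult.commute)
qed

end

theorem corollary21:
  fixes \<epsilon> :: real
  assumes "\<epsilon> > 0"
  shows "\<exists>n0::nat. n0 \<ge> 1 \<and>
    (\<forall>(n::nat) (D::nat set) (v::nat) (a::nat) (b::nat).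
       D \<subseteq> {1..<n} \<longrightarrow> is_valley n D v \<longrightarrow> is_slope n D v a b \<longrightarrow> b - a \<ge> n0 \<longrightarrow>
       (1 - \<epsilon>) * (real (b - a) / real n) \<le> prob_one_at n D v \<and>
       prob_one_at n D v \<le> (1 + \<epsilon>) * (real (b - a) / real n))"
proof (intro exI[of _ "nat \<lceil>3 / \<epsilon>\<rceil> + 1"] conjI allI impI)
  fix n D v a b
  assume "D \<subseteq> {1..<n}" "is_valley n D v" "is_slope n D v a b" and long: "nat \<lceil>3 / \<epsilon>\<rceil> + 1 \<le> b - a"
  then interpret valley_slope n D v a b by unfold_locales
  have n: "real n > 0" using valley_bounds by auto
  define s where "s = real (b - a)"
  have "3 / \<epsilon> \<le> s" using long unfolding s_def by linarith
  hence "3 \<le> \<epsilon> * s" using assms by (simp add: divide_le_eq mult.commute)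
  hence "(1 - \<epsilon>) * s \<le> s + 1" "s + 3 \<le> (1 + \<epsilon>) * s"
    using assms \<open>3 / \<epsilon> \<le> s\<close> by (auto simp: algebra_simps)
  moreover have "real (b - a + 1) = s + 1" "real (b - a + 3) = s + 3" unfolding s_def by simp_all
  ultimately have "(1 - \<epsilon>) * s / real n \<le> real (b - a + 1) / real n"
    "real (b - a + 3) / real n \<le> (1 + \<epsilon>) * s / real n"
    using n by (auto intro: divide_right_mono)
  thus "(1 - \<epsilon>) * (real (b - a) / real n) \<le> prob_one_at n D v"
    "prob_one_at n D v \<le> (1 + \<epsilon>) * (real (b - a) / real n)"
    using prob_one_at_bounds unfolding s_def by auto
qed simp
end
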